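(* Let $A\in\mathbb{R}^{n\times n}$, $B\in\mathbb{R}^n$ with $(A,B)$ controllable, $n\ge2$, and $\mathcal{C}=(B\;AB\;\cdots\;A^{n-1}B)$. For $k=1,\dots,n-1$ let $\mathrm{an}_k\in\mathbb{R}^{(n-k)\times(n-k+1)}$ have full row rank, with $\mathrm{an}_kB_{k-1}=0$, where $B_0=B$ and $B_k=\mathrm{an}_k\cdots\mathrm{an}_1A^kB$. Then $B_{n-1}$ is a nonzero real number and $$e_n^T\mathcal{C}^{-1}=\frac{1}{B_{n-1}}\,\mathrm{an}_{n-1}\mathrm{an}_{n-2}\cdots\mathrm{an}_2\mathrm{an}_1 .$$
   Context: $e_n$ is the $n$-th canonical basis vector of $\mathbb{R}^n$. *)

theory Defs
  imports "Jordan_Normal_Form.Jordan_Normal_Form" "Jordan_Normal_Form.DL_Rank"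
begin

definition ctrb_mat :: "nat \<Rightarrow> real mat \<Rightarrow> real vec \<Rightarrow> real mat" where
  "ctrb_mat n A b = mat_of_cols n (map (\<lambda>m. (A ^\<^sub>m m) *\<^sub>v b) [0..<n])"

definition controllable :: "nat \<Rightarrow> real mat \<Rightarrow> real vec \<Rightarrow> bool" where
  "controllable n A b \<longleftrightarrow> vec_space.rank n (ctrb_mat n A b) = n"

definition full_row_rank :: "real mat \<Rightarrow> bool" where
  "full_row_rank M \<longleftrightarrow> vec_space.rank (dim_row M) M = dim_row M"

fun an_prod :: "nat \<Rightarrow> (nat \<Rightarrow> real mat) \<Rightarrow> nat \<Rightarrow> real mat" where
  "an_prod n an 0 = 1\<^sub>m n"
| "an_prod n an (Suc k) = an (Suc k) * an_prod n an k"

definition Bk :: "nat \<Rightarrow> real mat \<Rightarrow> real vec \<Rightarrow> (nat \<Rightarrow> real mat) \<Rightarrow> nat \<Rightarrow> real vec" where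
  "Bk n A b an k = an_prod n an k *\<^sub>v ((A ^\<^sub>m k) *\<^sub>v b)"

end

theory Submission
  imports Defs
begin

text \<open>
  Let P = an(n-1) ... an(1), a 1 x n matrix. The hypotheses an(k) B(k-1) = 0 make the
  partial products an(k) ... an(1) kill B, AB, ..., A^(k-1) B, so P kills every column of
  the controllability matrix C except the last one, which it sends to B(n-1).
  Hence P C = B(n-1) e_n^T. Each an(k) has full row rank, hence is surjective, so P is
  surjective and in particular nonzero; as C is invertible, this forces B(n-1) to be
  nonzero, and multiplying P C = B(n-1) e_n^T by the inverse of C gives the claim.
\<close>

lemma (in vec_space) span_cols_full_rank:
  assumes M: "M \<in> carrier_mat n nc" and rk: "rank M = n"
  shows "span (set (cols M)) = carrier_vec n"
proof -
  let ?W = "span (set (cols M))"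
  have S: "set (cols M) \<subseteq> carrier_vec n" using M cols_dim by blast
  have subm: "submodule class_ring ?W V" using span_is_submodule S by simp
  have vsW: "vectorspace class_ring (vs ?W)"
    using subspace_is_vs span_is_subspace S by blast
  obtain \<beta> where \<beta>: "finite \<beta>" "vectorspace.basis class_ring (vs ?W) \<beta>"
    using vectorspace.finite_basis_exists[OF vsW fin_dim_span_cols[OF M]] by blast
  have card: "card \<beta> = n"
    using rk vectorspace.dim_basis[OF vsW \<beta>] unfolding rank_def by simp
  have \<beta>W: "\<beta> \<subseteq> ?W" and "LinearCombinations.module.lin_indpt class_ring (vs ?W) \<beta>"
    using \<beta>(2) vectorspace.basis_def[OF vsW] by auto
  then have li: "lin_indpt \<beta>" using span_li_not_depend(2)[OF _ subm] by simp
  have "\<beta> \<subseteq> carrier_vec n" using \<beta>W span_is_subset2[OF S] by auto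
  then have "basis \<beta>" using dim_li_is_basis \<beta>(1) li card dim_is_n by simp
  then have "carrier_vec n \<subseteq> ?W"
    using span_is_subset[OF \<beta>W subm] unfolding basis_def by simp
  then show ?thesis using span_is_subset2[OF S] by auto
qed

lemma full_row_rank_surj:
  assumes M: "M \<in> carrier_mat r c" and "full_row_rank M" and y: "y \<in> carrier_vec r"
  shows "\<exists>x \<in> carrier_vec c. M *\<^sub>v x = y"
proof -
  interpret vs: vec_space "TYPE(real)" r .
  have "vs.rank M = r" using assms(2) M unfolding full_row_rank_def by simp
  then have "vs.col_space M = carrier_vec r"
    using vs.span_cols_full_rank[OF M] unfolding vs.col_space_def by blast
  then show ?thesis using vs.col_space_eq[OF M] y M by auto
qed

lemma pow_mult_vec_carrier:
  assumes "A \<in> carrier_mat n n" and "b \<in> carrier_vec n"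
  shows "(A ^\<^sub>m j) *\<^sub>v b \<in> carrier_vec n"
  using assms by (metis mult_mat_vec_carrier pow_carrier_mat)

lemma ctrb_mat_carrier: "ctrb_mat n A b \<in> carrier_mat n n"
  unfolding ctrb_mat_def carrier_mat_def by simp

lemma an_carrier_Suc:
  assumes "\<forall>k \<in> {1..n-1}. an k \<in> carrier_mat (n - k) (n - k + 1)" and "Suc k \<le> n - 1"
  shows "an (Suc k) \<in> carrier_mat (n - Suc k) (n - k)"
proof -
  have "n - Suc k + 1 = n - k" using assms(2) by arith
  then show ?thesis using assms by force
qed

lemma an_prod_carrier:
  assumes "\<forall>k \<in> {1..n-1}. an k \<in> carrier_mat (n - k) (n - k + 1)" and "k \<le> n - 1"
  shows "an_prod n an k \<in> carrier_mat (n - k) n"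
  using assms(2)
proof (induction k)
  case (Suc k)
  have "an (Suc k) \<in> carrier_mat (n - Suc k) (n - k)"
    using an_carrier_Suc[OF assms(1) Suc.prems] .
  with Suc show ?case by (simp add: mult_carrier_mat)
qed simp

lemma an_prod_surj:
  assumes carrier: "\<forall>k \<in> {1..n-1}. an k \<in> carrier_mat (n - k) (n - k + 1)"
    and rank: "\<forall>k \<in> {1..n-1}. full_row_rank (an k)"
    and "k \<le> n - 1" and "y \<in> carrier_vec (n - k)"
  shows "\<exists>x \<in> carrier_vec n. an_prod n an k *\<^sub>v x = y"
  using assms(3,4)
proof (induction k arbitrary: y)
  case (Suc k)
  have an: "an (Suc k) \<in> carrier_mat (n - Suc k) (n - k)"
    using an_carrier_Suc[OF carrier Suc.prems(1)] .
  have "full_row_rank (an (Suc k))" using rank Suc.prems(1) by simp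
  then obtain z where z: "z \<in> carrier_vec (n - k)" "an (Suc k) *\<^sub>v z = y"
    using full_row_rank_surj[OF an _ Suc.prems(2)] by blast
  obtain x where x: "x \<in> carrier_vec n" "an_prod n an k *\<^sub>v x = z"
    using Suc.IH Suc.prems(1) z(1) by auto
  have "an_prod n an (Suc k) *\<^sub>v x = an (Suc k) *\<^sub>v (an_prod n an k *\<^sub>v x)"
    using assoc_mult_mat_vec[OF an an_prod_carrier[OF carrier] x(1)] Suc.prems(1) by simp
  then show ?case using x z by auto
qed auto

lemma an_prod_annihilates_Krylov:
  assumes A: "A \<in> carrier_mat n n" and b: "b \<in> carrier_vec n"
    and carrier: "\<forall>k \<in> {1..n-1}. an k \<in> carrier_mat (n - k) (n - k + 1)"
    and annih: "\<forall>k \<in> {1..n-1}. an k *\<^sub>v Bk n A b an (k - 1) = 0\<^sub>v (n - k)"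
    and "k \<le> n - 1" and "j < k"
  shows "an_prod n an k *\<^sub>v ((A ^\<^sub>m j) *\<^sub>v b) = 0\<^sub>v (n - k)"
  using assms(5,6)
proof (induction k arbitrary: j)
  case (Suc k)
  have an: "an (Suc k) \<in> carrier_mat (n - Suc k) (n - k)"
    using an_carrier_Suc[OF carrier Suc.prems(1)] .
  have "an_prod n an (Suc k) *\<^sub>v ((A ^\<^sub>m j) *\<^sub>v b)
      = an (Suc k) *\<^sub>v (an_prod n an k *\<^sub>v ((A ^\<^sub>m j) *\<^sub>v b))"
    using assoc_mult_mat_vec[OF an an_prod_carrier[OF carrier] pow_mult_vec_carrier[OF A b]]
      Suc.prems(1) by simp
  moreover have "Suc k \<in> {1..n-1}" using Suc.prems(1) by simp
  then have "an (Suc k) *\<^sub>v Bk n A b an k = 0\<^sub>v (n - Suc k)"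
    using annih by fastforce
  ultimately show ?case
    using Suc an unfolding Bk_def by (cases "j = k") auto
qed simp

lemma col_ctrb_mat:
  assumes "A \<in> carrier_mat n n" and "b \<in> carrier_vec n" and "j < n"
  shows "col (ctrb_mat n A b) j = (A ^\<^sub>m j) *\<^sub>v b"
  using assms pow_mult_vec_carrier unfolding ctrb_mat_def by (subst col_mat_of_cols) auto

lemma controllable_invertible:
  assumes "controllable n A b"
  obtains C' where "C' \<in> carrier_mat n n" and "ctrb_mat n A b * C' = 1\<^sub>m n"
proof -
  note C = ctrb_mat_carrier[of n A b]
  have "det (ctrb_mat n A b) \<noteq> 0"
    using assms vec_space.det_rank_iff[OF C] unfolding controllable_def by simp
  from det_non_zero_imp_unit[OF C this] show ?thesis
    using that unfolding Units_def ring_mat_def by auto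
qed

lemma an_prod_mult_ctrb_mat:
  assumes "n \<ge> 2" and A: "A \<in> carrier_mat n n" and b: "b \<in> carrier_vec n"
    and carrier: "\<forall>k \<in> {1..n-1}. an k \<in> carrier_mat (n - k) (n - k + 1)"
    and annih: "\<forall>k \<in> {1..n-1}. an k *\<^sub>v Bk n A b an (k - 1) = 0\<^sub>v (n - k)"
  shows "an_prod n an (n - 1) * ctrb_mat n A b
    = (Bk n A b an (n - 1) $ 0) \<cdot>\<^sub>m mat_of_rows n [unit_vec n (n - 1)]"
    (is "?P * ?C = ?\<beta> \<cdot>\<^sub>m ?E")
proof -
  have P: "?P \<in> carrier_mat 1 n"
    using an_prod_carrier[OF carrier, of "n - 1"] \<open>n \<ge> 2\<close> by simp
  note C = ctrb_mat_carrier[of n A b]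
  show ?thesis
  proof (rule eq_matI)
    fix i j assume "i < dim_row (?\<beta> \<cdot>\<^sub>m ?E)" and "j < dim_col (?\<beta> \<cdot>\<^sub>m ?E)"
    then have i: "i = 0" and j: "j < n" by auto
    have "(?P * ?C) $$ (i, j) = col (?P * ?C) j $ i" using P C i j by auto
    also have "\<dots> = (?P *\<^sub>v ((A ^\<^sub>m j) *\<^sub>v b)) $ 0"
      using col_mult2[OF P C j] col_ctrb_mat[OF A b j] i by simp
    also have "\<dots> = (?\<beta> \<cdot>\<^sub>m ?E) $$ (i, j)"
    proof (cases "j < n - 1")
      case True
      then show ?thesis
        using an_prod_annihilates_Krylov[OF A b carrier annih, of "n - 1" j] \<open>n \<ge> 2\<close> i j
        by (auto simp: mat_of_rows_index)
    next
      case False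
      then show ?thesis using i j unfolding Bk_def by (auto simp: mat_of_rows_index)
    qed
    finally show "(?P * ?C) $$ (i, j) = (?\<beta> \<cdot>\<^sub>m ?E) $$ (i, j)" .
  qed (use P C in auto)
qed

lemma mult_right_inverse_scaled:
  fixes P E :: "'a :: field mat"
  assumes P: "P \<in> carrier_mat m n" and E: "E \<in> carrier_mat m n"
    and C: "C \<in> carrier_mat n n" and Ci: "Ci \<in> carrier_mat n n"
    and PC: "P * C = \<beta> \<cdot>\<^sub>m E" and CCi: "C * Ci = 1\<^sub>m n"
  shows "P = \<beta> \<cdot>\<^sub>m (E * Ci)"
proof -
  have "P = P * (C * Ci)" using CCi P by simp
  also have "\<dots> = (P * C) * Ci" using P C Ci by (simp add: assoc_mult_mat)
  also have "\<dots> = \<beta> \<cdot>\<^sub>m (E * Ci)" using PC E Ci by (simp add: mult_smult_assoc_mat)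
  finally show ?thesis .
qed

theorem mainTheorem13:
  fixes n :: nat and A :: "real mat" and b :: "real vec" and an :: "nat \<Rightarrow> real mat"
  assumes "n \<ge> 2"
    and "A \<in> carrier_mat n n" and "b \<in> carrier_vec n"
    and "controllable n A b"
    and "\<forall>k \<in> {1..n-1}. an k \<in> carrier_mat (n - k) (n - k + 1)"
    and "\<forall>k \<in> {1..n-1}. full_row_rank (an k)"
    and "\<forall>k \<in> {1..n-1}. an k *\<^sub>v Bk n A b an (k - 1) = 0\<^sub>v (n - k)"
  shows "Bk n A b an (n - 1) \<in> carrier_vec 1 \<and> Bk n A b an (n - 1) $ 0 \<noteq> 0 \<and>
    (\<forall>Ci \<in> carrier_mat n n. inverts_mat (ctrb_mat n A b) Ci \<longrightarrow>
       mat_of_rows n [unit_vec n (n - 1)] * Ci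
         = (1 / (Bk n A b an (n - 1) $ 0)) \<cdot>\<^sub>m an_prod n an (n - 1))"
proof -
  let ?P = "an_prod n an (n - 1)" and ?C = "ctrb_mat n A b"
  let ?E = "mat_of_rows n [unit_vec n (n - 1)]" and ?\<beta> = "Bk n A b an (n - 1) $ 0"
  have P: "?P \<in> carrier_mat 1 n"
    using an_prod_carrier[OF assms(5), of "n - 1"] assms(1) by simp
  note C = ctrb_mat_carrier[of n A b]
  have E: "?E \<in> carrier_mat 1 n" using mat_of_rows_carrier(1)[of n "[_]"] by simp
  have PC: "?P * ?C = ?\<beta> \<cdot>\<^sub>m ?E"
    using an_prod_mult_ctrb_mat[OF assms(1-3,5,7)] .
  have "?\<beta> \<noteq> 0"
  proof
    assume "?\<beta> = 0"
    obtain C' where "C' \<in> carrier_mat n n" "?C * C' = 1\<^sub>m n"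
      using controllable_invertible[OF assms(4)] .
    with \<open>?\<beta> = 0\<close> have "?P = 0\<^sub>m 1 n"
      using mult_right_inverse_scaled[OF P E C _ PC] by auto
    moreover obtain x where "x \<in> carrier_vec n" "?P *\<^sub>v x = unit_vec 1 0"
      using an_prod_surj[OF assms(5,6), of "n - 1" "unit_vec 1 0"] assms(1) by auto
    ultimately show False
      using index_mult_mat_vec[of 0 "0\<^sub>m 1 n" x] by simp
  qed
  moreover have "?E * Ci = (1 / ?\<beta>) \<cdot>\<^sub>m ?P"
    if "Ci \<in> carrier_mat n n" and "inverts_mat ?C Ci" for Ci
    using mult_right_inverse_scaled[OF P E C that(1) PC] that(2) C \<open>?\<beta> \<noteq> 0\<close>
    unfolding inverts_mat_def by (auto intro!: eq_matI)
  moreover have "Bk n A b an (n - 1) \<in> carrier_vec 1"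
    using P pow_mult_vec_carrier[OF assms(2,3)] unfolding Bk_def by simp
  ultimately show ?thesis by blast
qed

end
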